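(* Let $d\ge 0$ be an integer and let $G$ be a graph with $n\ge 2$ vertices and $\mathrm{tww}(G)\le d$. Then there exist disjoint sets $X,Y\subseteq V(G)$ with $|X|\ge n/(d+4)$ and $|Y|\ge n/(d+4)$ such that either every vertex of $X$ is adjacent to every vertex of $Y$, or no vertex of $X$ is adjacent to any vertex of $Y$. (That is, the class of graphs of twin-width at most $d$ has the strong Erdős–Hajnal property with $\varepsilon=1/(d+4)$.)
   Context: A trigraph $H$ consists of a vertex set $V(H)$ and two disjoint sets of unordered pairs of distinct vertices: black edges $E(H)$ and red edges $R(H)$. Two vertices are adjacent (neighbors) if they are joined by a black or a red edge. The red graph of $H$ is the graph $(V(H),R(H))$; $H$ is a $d$-trigraph if its red graph has maximum degree at most $d$. A graph is a trigraph with no red edges. Contracting two distinct vertices $u,v$ of a trigraph $H$ yields the trigraph obtained by deleting $u$ and $v$ and adding a new vertex $z$ such that, for every other vertex $x$: $zx$ is a black edge if both $ux$ and $vx$ are black edges; $zx$ is not an edge if $x$ is adjacent to neither $u$ nor $v$; and $zx$ is a red edge otherwise. All edges not incident to $u$ or $v$ are unchanged. A $d$-sequence of an $n$-vertex graph $G$ is a sequence of $d$-trigraphs $G=G_n,G_{n-1},\dots,G_1$ such that $G_1$ has a single vertex and each $G_{i-1}$ is obtained from $G_i$ by one contraction (so $G_i$ has $i$ vertices). The twin-width $\mathrm{tww}(G)$ of $G$ is the minimum $d$ such that $G$ admits a $d$-sequence. *)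

theory Defs
  imports Complex_Main
begin

definition is_graph :: "'a set \<Rightarrow> 'a set set \<Rightarrow> bool" where
  "is_graph V E \<longleftrightarrow> finite V \<and> (\<forall>e\<in>E. \<exists>x y. x \<noteq> y \<and> x \<in> V \<and> y \<in> V \<and> e = {x, y})"

text \<open>Trigraphs: vertex set, black edges, red edges (edges are 2-element sets).\<close>
record 'a trigraph =
  tV :: "'a set"
  tB :: "'a set set"
  tR :: "'a set set"

definition adjacent :: "'a trigraph \<Rightarrow> 'a \<Rightarrow> 'a \<Rightarrow> bool" where
  "adjacent H x y \<longleftrightarrow> {x, y} \<in> tB H \<union> tR H"

definition red_degree :: "'a trigraph \<Rightarrow> 'a \<Rightarrow> nat" where
  "red_degree H x = card {y. {x, y} \<in> tR H}"

definition is_d_trigraph :: "nat \<Rightarrow> 'a trigraph \<Rightarrow> bool" where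
  "is_d_trigraph d H \<longleftrightarrow> (\<forall>x\<in>tV H. red_degree H x \<le> d)"

definition graph_trigraph :: "'a set \<Rightarrow> 'a set set \<Rightarrow> 'a trigraph" where
  "graph_trigraph V E = \<lparr>tV = V, tB = E, tR = {}\<rparr>"

text \<open>Contract u and v of H into a new vertex z (z must not be one of the other
  remaining vertices; it may reuse the name u or v).\<close>
definition contract :: "'a trigraph \<Rightarrow> 'a \<Rightarrow> 'a \<Rightarrow> 'a \<Rightarrow> 'a trigraph" where
  "contract H u v z =
     \<lparr>tV = (tV H - {u, v}) \<union> {z},
      tB = {e \<in> tB H. u \<notin> e \<and> v \<notin> e}
           \<union> {{z, x} | x. x \<in> tV H - {u, v} \<and> {u, x} \<in> tB H \<and> {v, x} \<in> tB H},
      tR = {e \<in> tR H. u \<notin> e \<and> v \<notin> e}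
           \<union> {{z, x} | x. x \<in> tV H - {u, v} \<and> (adjacent H u x \<or> adjacent H v x)
                       \<and> \<not> ({u, x} \<in> tB H \<and> {v, x} \<in> tB H)}\<rparr>"

definition is_contraction :: "'a trigraph \<Rightarrow> 'a trigraph \<Rightarrow> bool" where
  "is_contraction H H' \<longleftrightarrow> (\<exists>u v z. u \<in> tV H \<and> v \<in> tV H \<and> u \<noteq> v \<and>
       z \<notin> tV H - {u, v} \<and> H' = contract H u v z)"

text \<open>A d-sequence G = G_n, ..., G_1, stored as the list [G_n, ..., G_1].\<close>
definition d_sequence :: "nat \<Rightarrow> 'a set \<Rightarrow> 'a set set \<Rightarrow> 'a trigraph list \<Rightarrow> bool" where
  "d_sequence d V E Hs \<longleftrightarrow>
     length Hs = card V \<and> Hs ! 0 = graph_trigraph V E \<and>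
     card (tV (Hs ! (card V - 1))) = 1 \<and>
     (\<forall>i < card V. is_d_trigraph d (Hs ! i)) \<and>
     (\<forall>i. i + 1 < card V \<longrightarrow> is_contraction (Hs ! i) (Hs ! (i + 1)))"

definition twin_width :: "'a set \<Rightarrow> 'a set set \<Rightarrow> nat" where
  "twin_width V E = (LEAST d. \<exists>Hs. d_sequence d V E Hs)"

end

theory Submission
  imports Defs
begin

text \<open>Follow a contraction sequence of G and keep, for every vertex w of the current
  trigraph, the set P w of vertices of G that were contracted into w. Black edges of the
  trigraph then witness complete pairs of parts, non-edges anticomplete pairs. Let
  k = n/(d+4). Initially all parts are singletons, at the end there is a single part V,
  so some contraction first creates a part P z with k \<le> |P z| < 2k. The red neighbours
  of z carry fewer than d k vertices, so the parts that are black neighbours or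
  non-neighbours of z together carry more than 2k vertices; one of the two unions has at
  least k vertices and forms a pure pair with P z.\<close>

definition trigraph_wf :: "'a trigraph \<Rightarrow> bool" where
  "trigraph_wf H \<longleftrightarrow> finite (tV H) \<and> (\<forall>e\<in>tB H \<union> tR H. e \<subseteq> tV H)"

definition trigraph_quotient ::
    "'a set \<Rightarrow> 'a set set \<Rightarrow> 'b trigraph \<Rightarrow> ('b \<Rightarrow> 'a set) \<Rightarrow> bool" where
  "trigraph_quotient V E H P \<longleftrightarrow> trigraph_wf H \<and> (\<forall>x\<in>tV H. P x \<subseteq> V) \<and>
     (\<forall>x\<in>tV H. \<forall>y\<in>tV H. x \<noteq> y \<longrightarrow> P x \<inter> P y = {}) \<and> V \<subseteq> \<Union>(P ` tV H) \<and>
     (\<forall>x\<in>tV H. \<forall>y\<in>tV H. x \<noteq> y \<longrightarrow> {x, y} \<in> tB H \<longrightarrow> (\<forall>a\<in>P x. \<forall>b\<in>P y. {a, b} \<in> E)) \<and>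
     (\<forall>x\<in>tV H. \<forall>y\<in>tV H. x \<noteq> y \<longrightarrow> \<not> adjacent H x y \<longrightarrow> (\<forall>a\<in>P x. \<forall>b\<in>P y. {a, b} \<notin> E))"

definition pure_pair :: "'a set \<Rightarrow> 'a set set \<Rightarrow> real \<Rightarrow> bool" where
  "pure_pair V E k \<longleftrightarrow> (\<exists>X Y. X \<subseteq> V \<and> Y \<subseteq> V \<and> X \<inter> Y = {} \<and>
     real (card X) \<ge> k \<and> real (card Y) \<ge> k \<and>
     ((\<forall>x\<in>X. \<forall>y\<in>Y. {x, y} \<in> E) \<or> (\<forall>x\<in>X. \<forall>y\<in>Y. {x, y} \<notin> E)))"

definition contract_origin :: "'a \<Rightarrow> 'a \<Rightarrow> 'a \<Rightarrow> 'a \<Rightarrow> 'a set" where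
  "contract_origin u v z x = (if x = z then {u, v} else {x})"

context
  fixes H :: "'a trigraph" and u v z :: 'a
  assumes wf: "trigraph_wf H" and u: "u \<in> tV H" and v: "v \<in> tV H" and uv: "u \<noteq> v"
    and z: "z \<notin> tV H - {u, v}"
begin

lemma tV_contract: "tV (contract H u v z) = tV H - {u, v} \<union> {z}"
  by (simp add: contract_def)

lemma trigraph_wf_contract: "trigraph_wf (contract H u v z)"
  using wf unfolding trigraph_wf_def contract_def by auto

lemma contract_origin_subset: "x \<in> tV (contract H u v z) \<Longrightarrow> contract_origin u v z x \<subseteq> tV H"
  using u v by (auto simp: tV_contract contract_origin_def)

lemma contract_origin_disjoint:
  "x \<in> tV (contract H u v z) \<Longrightarrow> y \<in> tV (contract H u v z) \<Longrightarrow> x \<noteq> y \<Longrightarrow>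
   contract_origin u v z x \<inter> contract_origin u v z y = {}"
  by (auto simp: tV_contract contract_origin_def)

lemma Union_contract_origin: "\<Union>(contract_origin u v z ` tV (contract H u v z)) = tV H"
  using u v z by (auto simp: tV_contract contract_origin_def)

lemma not_in_edges_if_not_vertex: "a \<notin> tV H \<Longrightarrow> {b, a} \<notin> tB H \<and> {b, a} \<notin> tR H"
  using wf unfolding trigraph_wf_def by blast

lemma tB_contract_iff:
  assumes "x \<in> tV (contract H u v z)" "y \<in> tV (contract H u v z)" "x \<noteq> y"
  shows "{x, y} \<in> tB (contract H u v z) \<longleftrightarrow>
    (\<forall>x'\<in>contract_origin u v z x. \<forall>y'\<in>contract_origin u v z y. {x', y'} \<in> tB H)"
  using assms z unfolding contract_def contract_origin_def
  by (auto simp: doubleton_eq_iff insert_commute not_in_edges_if_not_vertex)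

lemma adjacent_contract_iff:
  assumes "x \<in> tV (contract H u v z)" "y \<in> tV (contract H u v z)" "x \<noteq> y"
  shows "adjacent (contract H u v z) x y \<longleftrightarrow>
    (\<exists>x'\<in>contract_origin u v z x. \<exists>y'\<in>contract_origin u v z y. adjacent H x' y')"
  using assms z unfolding contract_def contract_origin_def adjacent_def
  by (auto simp: doubleton_eq_iff insert_commute not_in_edges_if_not_vertex)

lemma trigraph_quotient_contract:
  assumes "trigraph_quotient V E H P"
  shows "trigraph_quotient V E (contract H u v z) (\<lambda>x. \<Union>(P ` contract_origin u v z x))"
proof -
  let ?H = "contract H u v z" and ?O = "contract_origin u v z"
  have sub: "\<forall>x\<in>tV H. P x \<subseteq> V"
    and dis: "\<forall>x\<in>tV H. \<forall>y\<in>tV H. x \<noteq> y \<longrightarrow> P x \<inter> P y = {}"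
    and cov: "V \<subseteq> \<Union>(P ` tV H)"
    and blk: "\<forall>x\<in>tV H. \<forall>y\<in>tV H. x \<noteq> y \<longrightarrow> {x, y} \<in> tB H \<longrightarrow> (\<forall>a\<in>P x. \<forall>b\<in>P y. {a, b} \<in> E)"
    and non: "\<forall>x\<in>tV H. \<forall>y\<in>tV H. x \<noteq> y \<longrightarrow> \<not> adjacent H x y \<longrightarrow> (\<forall>a\<in>P x. \<forall>b\<in>P y. {a, b} \<notin> E)"
    using assms unfolding trigraph_quotient_def by auto
  have origins: "x' \<in> tV H" "y' \<in> tV H" "x' \<noteq> y'"
    if "x \<in> tV ?H" "y \<in> tV ?H" "x \<noteq> y" "x' \<in> ?O x" "y' \<in> ?O y" for x y x' y'
    using that contract_origin_subset contract_origin_disjoint by blast+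
  have "\<Union>(P ` tV H) = (\<Union>x\<in>tV ?H. \<Union>(P ` ?O x))"
    unfolding Union_contract_origin[symmetric] by simp
  then have "V \<subseteq> (\<Union>x\<in>tV ?H. \<Union>(P ` ?O x))"
    using cov by simp
  moreover have "\<Union>(P ` ?O x) \<subseteq> V" if "x \<in> tV ?H" for x
    using that sub contract_origin_subset by blast
  moreover have "\<Union>(P ` ?O x) \<inter> \<Union>(P ` ?O y) = {}"
    if "x \<in> tV ?H" "y \<in> tV ?H" "x \<noteq> y" for x y
    using origins[OF that] dis by blast
  moreover have "{a, b} \<in> E"
    if "x \<in> tV ?H" "y \<in> tV ?H" "x \<noteq> y" "{x, y} \<in> tB ?H"
      "a \<in> \<Union>(P ` ?O x)" "b \<in> \<Union>(P ` ?O y)" for x y a b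
    using that origins[OF that(1-3)] blk tB_contract_iff[OF that(1-3)] by blast
  moreover have "{a, b} \<notin> E"
    if "x \<in> tV ?H" "y \<in> tV ?H" "x \<noteq> y" "\<not> adjacent ?H x y"
      "a \<in> \<Union>(P ` ?O x)" "b \<in> \<Union>(P ` ?O y)" for x y a b
    using that origins[OF that(1-3)] non adjacent_contract_iff[OF that(1-3)] by blast
  ultimately show ?thesis
    unfolding trigraph_quotient_def using trigraph_wf_contract by simp
qed

end

lemma card_UN_le_card_mult:
  fixes k :: real
  assumes "finite S" and "\<forall>w\<in>S. real (card (P w)) \<le> k"
  shows "real (card (\<Union>(P ` S))) \<le> real (card S) * k"
proof -
  have "real (card (\<Union>(P ` S))) \<le> (\<Sum>w\<in>S. real (card (P w)))"
    using card_UN_le[OF assms(1)] by (metis of_nat_le_iff of_nat_sum)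
  also have "\<dots> \<le> (\<Sum>w\<in>S. k)"
    using assms(2) by (intro sum_mono) auto
  finally show ?thesis by simp
qed

lemma card_red_neighbour_parts_le:
  fixes k :: real
  assumes "trigraph_wf H" and "red_degree H z \<le> d" and "k \<ge> 0"
    and "\<forall>w\<in>tV H - {z}. real (card (P w)) < k"
  shows "real (card (\<Union>(P ` {w\<in>tV H - {z}. {z, w} \<in> tR H}))) \<le> real d * k"
proof -
  let ?R = "{w\<in>tV H - {z}. {z, w} \<in> tR H}"
  have "{y. {z, y} \<in> tR H} \<subseteq> tV H"
    using assms(1) unfolding trigraph_wf_def by blast
  then have "card ?R \<le> red_degree H z"
    using assms(1) unfolding red_degree_def trigraph_wf_def
    by (intro card_mono) (auto intro: finite_subset)
  then have "real (card ?R) * k \<le> real d * k"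
    using assms(2,3) by (intro mult_right_mono) auto
  moreover have "real (card (\<Union>(P ` ?R))) \<le> real (card ?R) * k"
    using assms(1,4) unfolding trigraph_wf_def
    by (intro card_UN_le_card_mult) (auto intro: less_imp_le)
  ultimately show ?thesis by linarith
qed

lemma pure_pair_if_medium_part:
  fixes k :: real
  assumes quotient: "trigraph_quotient V E H P"
    and z: "z \<in> tV H" and "red_degree H z \<le> d"
    and small: "\<forall>w\<in>tV H - {z}. real (card (P w)) < k"
    and medium: "k \<le> real (card (P z))" "real (card (P z)) < 2 * k"
    and size: "real (card V) = (real d + 4) * k"
  shows "pure_pair V E k"
proof -
  have wf: "trigraph_wf H" and sub: "\<forall>x\<in>tV H. P x \<subseteq> V"
    and dis: "\<forall>x\<in>tV H. \<forall>y\<in>tV H. x \<noteq> y \<longrightarrow> P x \<inter> P y = {}"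
    and cov: "V \<subseteq> \<Union>(P ` tV H)"
    and blk: "\<forall>x\<in>tV H. \<forall>y\<in>tV H. x \<noteq> y \<longrightarrow> {x, y} \<in> tB H \<longrightarrow> (\<forall>a\<in>P x. \<forall>b\<in>P y. {a, b} \<in> E)"
    and non: "\<forall>x\<in>tV H. \<forall>y\<in>tV H. x \<noteq> y \<longrightarrow> \<not> adjacent H x y \<longrightarrow> (\<forall>a\<in>P x. \<forall>b\<in>P y. {a, b} \<notin> E)"
    using quotient unfolding trigraph_quotient_def by auto
  define Red where "Red = \<Union>(P ` {w\<in>tV H - {z}. {z, w} \<in> tR H})"
  define Black where "Black = \<Union>(P ` {w\<in>tV H - {z}. {z, w} \<in> tB H})"
  define Non where "Non = \<Union>(P ` {w\<in>tV H - {z}. \<not> adjacent H z w})"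
  have parts_sub: "P z \<subseteq> V" "Red \<subseteq> V" "Black \<subseteq> V" "Non \<subseteq> V"
    using sub z unfolding Red_def Black_def Non_def by auto
  have "V \<subseteq> P z \<union> Red \<union> Black \<union> Non"
  proof
    fix a assume "a \<in> V"
    then obtain x where "x \<in> tV H" "a \<in> P x" using cov by blast
    then show "a \<in> P z \<union> Red \<union> Black \<union> Non"
      unfolding Red_def Black_def Non_def adjacent_def by (cases "x = z") auto
  qed
  with parts_sub have "P z \<union> Red \<union> Black \<union> Non = V"
    by blast
  then have "card V = card (P z \<union> Red \<union> Black \<union> Non)"
    by simp
  also have "\<dots> \<le> card (P z) + card Red + card Black + card Non"
    by (meson add_mono card_Un_le le_trans order_refl)
  finally have "real (card V) \<le> real (card (P z)) + real (card Red) + real (card Black) + real (card Non)"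
    by linarith
  moreover have "real (card Red) \<le> real d * k"
    unfolding Red_def using wf \<open>red_degree H z \<le> d\<close> medium small
    by (intro card_red_neighbour_parts_le) auto
  ultimately have "k \<le> real (card Black) \<or> k \<le> real (card Non)"
    using medium size by (simp add: algebra_simps, linarith)
  moreover have "P z \<inter> Black = {}" "P z \<inter> Non = {}"
    using dis z unfolding Black_def Non_def by auto
  moreover have "\<forall>x\<in>P z. \<forall>y\<in>Black. {x, y} \<in> E"
    using blk z unfolding Black_def by fastforce
  moreover have "\<forall>x\<in>P z. \<forall>y\<in>Non. {x, y} \<notin> E"
    using non z unfolding Non_def by fastforce
  ultimately show ?thesis
    unfolding pure_pair_def using parts_sub medium(1) by metis
qed

lemma contraction_quotient_or_pure_pair:
  fixes k :: real
  assumes quotient: "trigraph_quotient V E H P"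
    and small: "\<forall>w\<in>tV H. real (card (P w)) < k"
    and "is_contraction H H'" and "is_d_trigraph d H'"
    and size: "real (card V) = (real d + 4) * k"
  shows "pure_pair V E k \<or>
    (\<exists>P'. trigraph_quotient V E H' P' \<and> (\<forall>w\<in>tV H'. real (card (P' w)) < k))"
proof -
  obtain u v z where u: "u \<in> tV H" and v: "v \<in> tV H" and "u \<noteq> v"
    and z: "z \<notin> tV H - {u, v}" and H': "H' = contract H u v z"
    using \<open>is_contraction H H'\<close> unfolding is_contraction_def by blast
  have wf: "trigraph_wf H"
    using quotient unfolding trigraph_quotient_def by blast
  define P' where "P' x = \<Union>(P ` contract_origin u v z x)" for x
  have quotient': "trigraph_quotient V E H' P'"
    unfolding H' P'_def using trigraph_quotient_contract[OF wf u v \<open>u \<noteq> v\<close> z quotient] .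
  have tV': "tV H' = tV H - {u, v} \<union> {z}"
    unfolding H' using tV_contract[OF wf u v \<open>u \<noteq> v\<close> z] .
  have small': "\<forall>w\<in>tV H' - {z}. real (card (P' w)) < k"
    using small tV' unfolding P'_def contract_origin_def by auto
  show ?thesis
  proof (cases "real (card (P' z)) < k")
    case True
    then show ?thesis using quotient' small' by (metis Diff_iff singletonD)
  next
    case False
    have "card (P' z) \<le> card (P u) + card (P v)"
      unfolding P'_def contract_origin_def by (simp add: card_Un_le)
    moreover have "real (card (P u)) < k" "real (card (P v)) < k"
      using small u v by auto
    ultimately have "real (card (P' z)) < 2 * k"
      by linarith
    moreover have "red_degree H' z \<le> d"
      using \<open>is_d_trigraph d H'\<close> tV' unfolding is_d_trigraph_def by blast
    ultimately have "pure_pair V E k"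
      using False tV' by (intro pure_pair_if_medium_part[OF quotient' _ _ small' _ _ size]) auto
    then show ?thesis ..
  qed
qed

lemma red_degree_le_card:
  assumes "trigraph_wf H"
  shows "red_degree H x \<le> card (tV H)"
proof -
  have "{y. {x, y} \<in> tR H} \<subseteq> tV H"
    using assms unfolding trigraph_wf_def by blast
  then show ?thesis
    using assms unfolding red_degree_def trigraph_wf_def by (simp add: card_mono)
qed

lemma is_d_trigraph_mono: "is_d_trigraph d H \<Longrightarrow> d \<le> d' \<Longrightarrow> is_d_trigraph d' H"
  unfolding is_d_trigraph_def by fastforce

lemma d_sequence_mono: "d_sequence d V E Hs \<Longrightarrow> d \<le> d' \<Longrightarrow> d_sequence d' V E Hs"
  unfolding d_sequence_def by (meson is_d_trigraph_mono)

lemma contraction_exists: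
  assumes "trigraph_wf H" and "card (tV H) = Suc (Suc m)"
  shows "\<exists>H'. is_contraction H H' \<and> trigraph_wf H' \<and> card (tV H') = Suc m"
proof -
  have fin: "finite (tV H)"
    using assms(1) unfolding trigraph_wf_def by blast
  obtain u where u: "u \<in> tV H"
    using assms(2) by fastforce
  have "card (tV H - {u}) = Suc m"
    using assms(2) fin u by simp
  then obtain v where "v \<in> tV H - {u}"
    by (metis all_not_in_conv card.empty Zero_not_Suc)
  then have v: "v \<in> tV H" and "u \<noteq> v" by auto
  have z: "u \<notin> tV H - {u, v}" by blast
  have "tV (contract H u v u) = tV H - {v}"
    using tV_contract[OF assms(1) u v \<open>u \<noteq> v\<close> z] u \<open>u \<noteq> v\<close> by auto
  then have "card (tV (contract H u v u)) = Suc m"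
    using assms(2) fin v by simp
  moreover have "is_contraction H (contract H u v u)"
    unfolding is_contraction_def using u v \<open>u \<noteq> v\<close> z by blast
  ultimately show ?thesis
    using trigraph_wf_contract[OF assms(1) u v \<open>u \<noteq> v\<close> z] by blast
qed

lemma contraction_sequence_exists:
  assumes "trigraph_wf H" and "card (tV H) = Suc m"
  shows "\<exists>Hs. length Hs = Suc m \<and> Hs ! 0 = H \<and> card (tV (Hs ! m)) = 1 \<and>
    (\<forall>i<Suc m. is_d_trigraph (Suc m) (Hs ! i)) \<and>
    (\<forall>i. i + 1 < Suc m \<longrightarrow> is_contraction (Hs ! i) (Hs ! (i + 1)))"
  using assms
proof (induction m arbitrary: H)
  case 0
  then have "is_d_trigraph 1 H"
    using red_degree_le_card unfolding is_d_trigraph_def by (metis One_nat_def)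
  then show ?case
    using 0 by (intro exI[of _ "[H]"]) auto
next
  case (Suc m)
  obtain H' where H': "is_contraction H H'" "trigraph_wf H'" "card (tV H') = Suc m"
    using contraction_exists[OF Suc.prems] by blast
  obtain Hs where Hs: "length Hs = Suc m" "Hs ! 0 = H'" "card (tV (Hs ! m)) = 1"
    "\<forall>i<Suc m. is_d_trigraph (Suc m) (Hs ! i)"
    "\<forall>i. i + 1 < Suc m \<longrightarrow> is_contraction (Hs ! i) (Hs ! (i + 1))"
    using Suc.IH[OF H'(2,3)] by blast
  have d_trigraph: "is_d_trigraph (Suc (Suc m)) ((H # Hs) ! i)" if "i < Suc (Suc m)" for i
  proof (cases i)
    case 0
    then show ?thesis
      using red_degree_le_card[OF Suc.prems(1)] Suc.prems(2) unfolding is_d_trigraph_def by simp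
  next
    case (Suc j)
    then have "is_d_trigraph (Suc m) (Hs ! j)" using Hs(4) that by simp
    then show ?thesis using Suc is_d_trigraph_mono le_SucI by fastforce
  qed
  have contraction: "is_contraction ((H # Hs) ! i) (Hs ! i)" if "i < Suc m" for i
    using H'(1) Hs(2,5) that by (cases i) auto
  show ?case
    by (intro exI[of _ "H # Hs"] conjI allI impI) (simp_all add: Hs(1,3) d_trigraph contraction)
qed

lemma d_sequence_exists:
  assumes "is_graph V E" and "V \<noteq> {}"
  shows "\<exists>Hs. d_sequence (card V) V E Hs"
proof -
  have "trigraph_wf (graph_trigraph V E)"
    using assms(1) unfolding is_graph_def trigraph_wf_def graph_trigraph_def by auto
  moreover obtain m where "card V = Suc m"
    using assms unfolding is_graph_def by (metis card_0_eq not0_implies_Suc)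
  ultimately show ?thesis
    using contraction_sequence_exists[of "graph_trigraph V E" m]
    unfolding d_sequence_def graph_trigraph_def by auto
qed

lemma d_sequence_if_twin_width_le:
  assumes "is_graph V E" and "V \<noteq> {}" and "twin_width V E \<le> d"
  shows "\<exists>Hs. d_sequence d V E Hs"
proof -
  have "\<exists>Hs. d_sequence (twin_width V E) V E Hs"
    unfolding twin_width_def using d_sequence_exists[OF assms(1,2)]
    by (rule LeastI[where P = "\<lambda>d. \<exists>Hs. d_sequence d V E Hs"])
  then show ?thesis
    using assms(3) d_sequence_mono by blast
qed

lemma d_sequence_quotient_or_pure_pair:
  fixes k :: real
  assumes seq: "d_sequence d V E Hs" and "is_graph V E" and "1 < k"
    and size: "real (card V) = (real d + 4) * k" and "i < card V"
  shows "pure_pair V E k \<or>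
    (\<exists>P. trigraph_quotient V E (Hs ! i) P \<and> (\<forall>w\<in>tV (Hs ! i). real (card (P w)) < k))"
  using \<open>i < card V\<close>
proof (induction i)
  case 0
  have "trigraph_quotient V E (Hs ! 0) (\<lambda>x. {x})"
    using seq \<open>is_graph V E\<close>
    unfolding d_sequence_def trigraph_quotient_def trigraph_wf_def graph_trigraph_def
      is_graph_def adjacent_def
    by auto
  then show ?case using \<open>1 < k\<close> by auto
next
  case (Suc i)
  have "is_contraction (Hs ! i) (Hs ! Suc i)" "is_d_trigraph d (Hs ! Suc i)"
    using seq Suc.prems unfolding d_sequence_def by auto
  moreover have "pure_pair V E k \<or>
      (\<exists>P. trigraph_quotient V E (Hs ! i) P \<and> (\<forall>w\<in>tV (Hs ! i). real (card (P w)) < k))"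
    using Suc by simp
  ultimately show ?case
    using contraction_quotient_or_pure_pair[OF _ _ _ _ size] by blast
qed

lemma pure_pair_if_le_one:
  assumes "2 \<le> card V" and "k \<le> 1"
  shows "pure_pair V E k"
proof -
  have "finite V" "\<not> card V \<le> Suc 0"
    using assms(1) card.infinite by fastforce+
  then obtain a b where "a \<in> V" "b \<in> V" "a \<noteq> b"
    using card_le_Suc0_iff_eq by blast
  then show ?thesis
    unfolding pure_pair_def using assms(2)
    by (intro exI[of _ "{a}"] exI[of _ "{b}"]) auto
qed

lemma pure_pair_if_d_sequence:
  fixes k :: real
  assumes seq: "d_sequence d V E Hs" and "is_graph V E" and "2 \<le> card V" and "1 < k"
    and size: "real (card V) = (real d + 4) * k"
  shows "pure_pair V E k"
proof -
  let ?H = "Hs ! (card V - 1)"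
  have "card V - 1 < card V" using assms(3) by simp
  with d_sequence_quotient_or_pure_pair[OF seq assms(2,4) size]
  consider "pure_pair V E k"
    | P where "trigraph_quotient V E ?H P" "\<forall>w\<in>tV ?H. real (card (P w)) < k"
    by blast
  then show ?thesis
  proof cases
    case 1
    then show ?thesis .
  next
    case (2 P)
    obtain w where "tV ?H = {w}"
      using seq card_1_singletonE unfolding d_sequence_def by blast
    then have "P w = V" and "real (card (P w)) < k"
      using 2 unfolding trigraph_quotient_def by auto
    moreover have "k \<le> real (card V)"
      using \<open>1 < k\<close> size by (simp add: mult_le_cancel_right1)
    ultimately show ?thesis by simp
  qed
qed

theorem mainTheorem11:
  fixes V :: "'a set" and E :: "'a set set" and d :: nat
  assumes "is_graph V E"
    and "card V \<ge> 2"
    and "twin_width V E \<le> d"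
  shows "\<exists>X Y. X \<subseteq> V \<and> Y \<subseteq> V \<and> X \<inter> Y = {} \<and>
           real (card X) \<ge> real (card V) / (real d + 4) \<and>
           real (card Y) \<ge> real (card V) / (real d + 4) \<and>
           ((\<forall>x\<in>X. \<forall>y\<in>Y. {x, y} \<in> E) \<or> (\<forall>x\<in>X. \<forall>y\<in>Y. {x, y} \<notin> E))"
proof -
  define k where "k = real (card V) / (real d + 4)"
  have size: "real (card V) = (real d + 4) * k"
    unfolding k_def by simp
  have "pure_pair V E k"
  proof (cases "k \<le> 1")
    case True
    then show ?thesis using assms(2) pure_pair_if_le_one by blast
  next
    case False
    obtain Hs where "d_sequence d V E Hs"
      using d_sequence_if_twin_width_le assms by fastforce
    then show ?thesis
      using assms(1,2) False size by (intro pure_pair_if_d_sequence) auto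
  qed
  then show ?thesis
    unfolding pure_pair_def k_def .
qed

end
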